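(* Let $G$ be a finite group, let $\varphi: G\to \mathcal{U}(d)$ be a (non-projective) unitary representation, and let $\ket{\Psi_1},\dots,\ket{\Psi_n}\in\mathbb{C}^d$ be nonzero vectors such that the rank-one operators $A_k=\ket{\Psi_k}\bra{\Psi_k}$ are pairwise distinct, satisfy $\sum_{k=1}^n A_k=\mathbb{1}_d$, and satisfy $\varphi(g)A_k\varphi(g)^\dagger\in\{A_1,\dots,A_n\}$ for all $g\in G$ and all $k$. Let $M=(\ket{\Psi_1}\,\cdots\,\ket{\Psi_n})\in\mathbb{C}^{d\times n}$ be the matrix with columns $\ket{\Psi_k}$. Then there exist a homomorphism $\pi: G\to \mathcal{S}_n$ and a unitary representation $\varphi_{\rm mon}: G\to\mathcal{U}(n)$ all of whose images are monomial matrices, with $\varphi_{\rm mon}(g)e_k = e^{i\phi(g,k)}e_{\pi(g)k}$ for some real phases $\phi(g,k)$, such that $\varphi(g)M = M\varphi_{\rm mon}(g)$ for all $g\in G$.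
   Context: $\mathcal{U}(n)$ is the group of unitary $n\times n$ matrices, $\mathcal{S}_n$ the symmetric group on $n$ symbols, $e_1,\dots,e_n$ the standard basis of $\mathbb{C}^n$. A monomial matrix is a matrix with exactly one nonzero entry in each row and each column. *)

theory Defs
  imports "HOL-Analysis.Analysis" "HOL-Algebra.Group"
begin

definition cadjoint :: "complex^'m^'n \<Rightarrow> complex^'n^'m" where
  "cadjoint A = (\<chi> i j. cnj (A $ j $ i))"

definition unitary_mat :: "complex^'n^'n \<Rightarrow> bool" where
  "unitary_mat U \<longleftrightarrow> U ** cadjoint U = mat 1 \<and> cadjoint U ** U = mat 1"

definition ketbra :: "complex^'n \<Rightarrow> complex^'n^'n" where
  "ketbra v = (\<chi> i j. v $ i * cnj (v $ j))"

definition unitary_rep :: "('g, 'b) monoid_scheme \<Rightarrow> ('g \<Rightarrow> complex^'n^'n) \<Rightarrow> bool" where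
  "unitary_rep G \<phi> \<longleftrightarrow>
     (\<forall>g\<in>carrier G. unitary_mat (\<phi> g)) \<and>
     (\<forall>g\<in>carrier G. \<forall>h\<in>carrier G. \<phi> (g \<otimes>\<^bsub>G\<^esub> h) = \<phi> g ** \<phi> h)"

definition monomial_mat :: "complex^'n^'n \<Rightarrow> bool" where
  "monomial_mat A \<longleftrightarrow> (\<forall>i. \<exists>!j. A $ i $ j \<noteq> 0) \<and> (\<forall>j. \<exists>!i. A $ i $ j \<noteq> 0)"

end

theory Submission
  imports Defs
begin

text \<open>If \<open>\<phi> g\<close> maps the projector onto the line of \<open>\<Psi>\<^sub>k\<close> to some \<open>A\<^sub>l\<close>, then \<open>\<phi> g \<Psi>\<^sub>k\<close> is a
  unimodular multiple of \<open>\<Psi>\<^sub>l\<close>. Since the \<open>A\<^sub>l\<close> are distinct and \<open>\<phi> g\<close> is invertible, \<open>k \<mapsto> l\<close>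
  is a permutation \<open>\<pi> g\<close>, and together with the phases it forms a generalized permutation
  matrix \<open>\<phi>\<^sub>m\<^sub>o\<^sub>n g\<close> with \<open>\<phi> g M = M \<phi>\<^sub>m\<^sub>o\<^sub>n g\<close>. Permutation and phases are uniquely determined
  by the vectors \<open>\<phi> g \<Psi>\<^sub>k\<close>, so comparing \<open>\<phi> (g h) \<Psi>\<^sub>k = \<phi> g (\<phi> h \<Psi>\<^sub>k)\<close> shows that \<open>\<pi>\<close> and
  \<open>\<phi>\<^sub>m\<^sub>o\<^sub>n\<close> are homomorphisms.\<close>

definition gen_perm_mat :: "('n::finite \<Rightarrow> 'n) \<Rightarrow> ('n \<Rightarrow> complex) \<Rightarrow> complex^'n^'n" where
  "gen_perm_mat p a = (\<chi> i k. if i = p k then a k else 0)"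

lemma gen_perm_mat_mult:
  "gen_perm_mat p a ** gen_perm_mat q b = gen_perm_mat (p \<circ> q) (\<lambda>k. a (q k) * b k)"
proof -
  have "(\<Sum>j\<in>UNIV. (if i = p j then a j else 0) * (if j = q k then b k else 0))
      = (if i = p (q k) then a (q k) * b k else 0)" for i k
    by (simp add: if_distrib[of "\<lambda>x. _ * x"] cong: if_cong)
  then show ?thesis
    by (simp add: vec_eq_iff matrix_matrix_mult_def gen_perm_mat_def)
qed

lemma gen_perm_mat_id: "gen_perm_mat id (\<lambda>_. 1) = mat 1"
  by (simp add: vec_eq_iff gen_perm_mat_def mat_def)

lemma cadjoint_gen_perm_mat:
  assumes "bij p"
  shows "cadjoint (gen_perm_mat p a) = gen_perm_mat (inv_into UNIV p) (\<lambda>k. cnj (a (inv_into UNIV p k)))"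
  using assms by (auto simp: vec_eq_iff cadjoint_def gen_perm_mat_def bij_inv_eq_iff bij_is_inj)

lemma unitary_gen_perm_mat:
  assumes "bij p" and "\<And>k. cmod (a k) = 1"
  shows "unitary_mat (gen_perm_mat p a)"
proof -
  have "a k * cnj (a k) = 1" for k
    using assms(2) by (metis complex_norm_square of_real_1 power_one)
  moreover have "p \<circ> inv_into UNIV p = id" "inv_into UNIV p \<circ> p = id"
    using assms(1) by (simp_all add: fun_eq_iff bij_is_inj bij_is_surj surj_f_inv_f)
  moreover have "inv_into UNIV p (p k) = k" for k
    using assms(1) by (simp add: bij_is_inj)
  ultimately show ?thesis
    using assms(1)
    by (simp add: unitary_mat_def cadjoint_gen_perm_mat gen_perm_mat_mult mult.commute gen_perm_mat_id)
qed

lemma monomial_gen_perm_mat: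
  assumes "bij p" and "\<And>k. a k \<noteq> 0"
  shows "monomial_mat (gen_perm_mat p a)"
  using assms by (simp add: monomial_mat_def gen_perm_mat_def) (metis bij_iff)

lemma gen_perm_mat_axis: "gen_perm_mat p a *v axis k 1 = axis (p k) (a k)"
  by (simp add: vec_eq_iff matrix_vector_mult_def gen_perm_mat_def axis_def
      if_distrib[of "\<lambda>x. _ * x"] cong: if_cong)

lemma ketbra_matrix_vector_mult: "ketbra (A *v v) = A ** ketbra v ** cadjoint A"
  by (simp add: vec_eq_iff matrix_matrix_mult_def matrix_vector_mult_def ketbra_def
      cadjoint_def sum_distrib_left sum_distrib_right cnj_sum mult_ac)

lemma ketbra_unimodular_scale:
  assumes "cmod c = 1"
  shows "ketbra (c *s v) = ketbra v"
proof -
  have "c * cnj c = 1"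
    using assms by (metis complex_norm_square of_real_1 power_one)
  then show ?thesis
    by (simp add: vec_eq_iff ketbra_def)
qed

lemma ketbra_eq_imp_unimodular_multiple:
  assumes "ketbra v = ketbra w" and "w \<noteq> 0"
  obtains c where "cmod c = 1" and "v = c *s w"
proof -
  obtain j where j: "w $ j \<noteq> 0"
    using assms(2) by (metis vec_eq_iff zero_index)
  have entries: "v $ i * cnj (v $ l) = w $ i * cnj (w $ l)" for i l
    using assms(1) by (metis (no_types, lifting) ketbra_def vec_lambda_beta)
  then have norms: "cmod (v $ j) ^ 2 = cmod (w $ j) ^ 2"
    by (metis complex_norm_square of_real_eq_iff of_real_power)
  with j have vj: "v $ j \<noteq> 0"
    by auto
  define c where "c = cnj (w $ j) / cnj (v $ j)"
  have "cmod c = 1"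
    using norms vj j unfolding c_def by (simp add: norm_divide)
  moreover have "v $ i = c * w $ i" for i
    using entries[of i j] vj unfolding c_def by (simp add: field_simps)
  then have "v = c *s w"
    by (simp add: vec_eq_iff)
  ultimately show ?thesis
    using that by blast
qed

lemma unimodular_multiples_eqD:
  assumes "inj (\<lambda>k. ketbra (\<Psi> k))" and "\<And>k. \<Psi> k \<noteq> 0"
    and "c *s \<Psi> l = c' *s \<Psi> l'" and "cmod c = 1" and "cmod c' = 1"
  shows "l = l' \<and> c = c'"
proof -
  have "ketbra (\<Psi> l) = ketbra (\<Psi> l')"
    using assms(3-5) by (metis ketbra_unimodular_scale)
  then have l: "l = l'"
    using assms(1) by (meson injD)
  obtain j where "\<Psi> l $ j \<noteq> 0"
    using assms(2) by (metis vec_eq_iff zero_index)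
  moreover have "c * \<Psi> l $ j = c' * \<Psi> l $ j"
    using assms(3) l by (metis vector_smult_component)
  ultimately show ?thesis
    using l by simp
qed

lemma unitary_mat_conj_cancel:
  "unitary_mat U \<Longrightarrow> cadjoint U ** (U ** K ** cadjoint U) ** U = K"
  by (simp add: unitary_mat_def) (metis matrix_mul_assoc matrix_mul_lid matrix_mul_rid)

definition monomial_action ::
    "complex^'d^'d \<Rightarrow> ('n::finite \<Rightarrow> complex^'d) \<Rightarrow> ('n \<Rightarrow> 'n) \<Rightarrow> ('n \<Rightarrow> complex) \<Rightarrow> bool" where
  "monomial_action U \<Psi> p a \<longleftrightarrow>
     p permutes UNIV \<and> (\<forall>k. cmod (a k) = 1) \<and> (\<forall>k. U *v \<Psi> k = a k *s \<Psi> (p k))"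

lemma monomial_action_exists:
  fixes \<Psi> :: "'n::finite \<Rightarrow> complex^'d"
  assumes "unitary_mat U" and "\<And>k. \<Psi> k \<noteq> 0" and "inj (\<lambda>k. ketbra (\<Psi> k))"
    and "\<And>k. U ** ketbra (\<Psi> k) ** cadjoint U \<in> range (\<lambda>l. ketbra (\<Psi> l))"
  shows "\<exists>p a. monomial_action U \<Psi> p a"
proof -
  have "\<exists>l c. cmod c = 1 \<and> U *v \<Psi> k = c *s \<Psi> l" for k
  proof -
    obtain l where "ketbra (U *v \<Psi> k) = ketbra (\<Psi> l)"
      using assms(4)[of k] by (auto simp: ketbra_matrix_vector_mult)
    then show ?thesis
      using assms(2) by (metis ketbra_eq_imp_unimodular_multiple)
  qed
  then obtain p a where unimodular: "\<And>k. cmod (a k) = 1"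
    and image: "\<And>k. U *v \<Psi> k = a k *s \<Psi> (p k)"
    by metis
  have "inj p"
  proof (rule injI)
    fix k k'
    assume "p k = p k'"
    then have "U ** ketbra (\<Psi> k) ** cadjoint U = U ** ketbra (\<Psi> k') ** cadjoint U"
      using image unimodular by (metis ketbra_matrix_vector_mult ketbra_unimodular_scale)
    then have "ketbra (\<Psi> k) = ketbra (\<Psi> k')"
      using unitary_mat_conj_cancel[OF assms(1)] by metis
    then show "k = k'"
      using assms(3) by (meson injD)
  qed
  then have "p permutes UNIV"
    by (intro bij_imp_permutes) (simp_all add: bij_def finite_UNIV_inj_surj)
  then show ?thesis
    using unimodular image unfolding monomial_action_def by blast
qed

lemma monomial_action_unique:
  assumes "monomial_action U \<Psi> p a" and "monomial_action U \<Psi> p' a'"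
    and "inj (\<lambda>k. ketbra (\<Psi> k))" and "\<And>k. \<Psi> k \<noteq> 0"
  shows "p = p' \<and> a = a'"
  using assms unimodular_multiples_eqD[OF assms(3,4)]
  unfolding monomial_action_def by (metis ext)

lemma monomial_action_mult:
  assumes "monomial_action U \<Psi> p a" and "monomial_action V \<Psi> q b"
  shows "monomial_action (U ** V) \<Psi> (p \<circ> q) (\<lambda>k. a (q k) * b k)"
  using assms
  by (simp add: monomial_action_def permutes_compose norm_mult vector_scalar_commute mult.commute
      flip: matrix_vector_mul_assoc)

lemma monomial_action_intertwines:
  assumes "monomial_action U \<Psi> p a"
  shows "U ** (\<chi> i k. \<Psi> k $ i) = (\<chi> i k. \<Psi> k $ i) ** gen_perm_mat p a"
proof -
  have "(U *v \<Psi> k) $ i = (a k *s \<Psi> (p k)) $ i" for i k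
    using assms by (simp add: monomial_action_def)
  then have "(\<Sum>j\<in>UNIV. U $ i $ j * \<Psi> k $ j) = a k * \<Psi> (p k) $ i" for i k
    by (simp add: matrix_vector_mult_def)
  moreover have "(\<Sum>j\<in>UNIV. \<Psi> j $ i * (if j = p k then a k else 0)) = a k * \<Psi> (p k) $ i" for i k
    by (simp add: if_distrib[of "\<lambda>x. _ * x"] mult.commute cong: if_cong)
  ultimately show ?thesis
    by (simp add: vec_eq_iff matrix_matrix_mult_def gen_perm_mat_def)
qed

lemma monomial_action_rep_mult:
  assumes "group G" and "unitary_rep G \<phi>"
    and "inj (\<lambda>k. ketbra (\<Psi> k))" and "\<And>k. \<Psi> k \<noteq> 0"
    and act: "\<And>g. g \<in> carrier G \<Longrightarrow> monomial_action (\<phi> g) \<Psi> (\<pi> g) (a g)"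
    and g: "g \<in> carrier G" and h: "h \<in> carrier G"
  shows "\<pi> (g \<otimes>\<^bsub>G\<^esub> h) = \<pi> g \<circ> \<pi> h \<and> a (g \<otimes>\<^bsub>G\<^esub> h) = (\<lambda>k. a g (\<pi> h k) * a h k)"
proof -
  have gh: "g \<otimes>\<^bsub>G\<^esub> h \<in> carrier G"
    using assms(1) g h by (simp add: group.is_monoid monoid.m_closed)
  have "\<phi> (g \<otimes>\<^bsub>G\<^esub> h) = \<phi> g ** \<phi> h"
    using assms(2) g h unfolding unitary_rep_def by blast
  then have "monomial_action (\<phi> (g \<otimes>\<^bsub>G\<^esub> h)) \<Psi> (\<pi> g \<circ> \<pi> h) (\<lambda>k. a g (\<pi> h k) * a h k)"
    using monomial_action_mult[OF act[OF g] act[OF h]] by simp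
  then show ?thesis
    using monomial_action_unique[OF act[OF gh] _ assms(3,4)] by blast
qed

lemma unitary_rep_gen_perm_mat:
  assumes "\<And>g. g \<in> carrier G \<Longrightarrow> \<pi> g permutes UNIV \<and> (\<forall>k. cmod (a g k) = 1)"
    and "\<And>g h. g \<in> carrier G \<Longrightarrow> h \<in> carrier G \<Longrightarrow>
           \<pi> (g \<otimes>\<^bsub>G\<^esub> h) = \<pi> g \<circ> \<pi> h \<and> a (g \<otimes>\<^bsub>G\<^esub> h) = (\<lambda>k. a g (\<pi> h k) * a h k)"
  shows "unitary_rep G (\<lambda>g. gen_perm_mat (\<pi> g) (a g))"
  using assms
  by (auto simp: unitary_rep_def gen_perm_mat_mult intro!: unitary_gen_perm_mat permutes_bij)

theorem mainTheorem2:
  fixes G :: "('g, 'b) monoid_scheme"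
    and \<phi> :: "'g \<Rightarrow> complex^'d^'d"
    and \<Psi> :: "'n::finite \<Rightarrow> complex^'d::finite"
  assumes "group G" and "finite (carrier G)"
    and "unitary_rep G \<phi>"
    and "\<And>k. \<Psi> k \<noteq> 0"
    and "inj (\<lambda>k. ketbra (\<Psi> k))"
    and "(\<Sum>k\<in>UNIV. ketbra (\<Psi> k)) = mat 1"
    and "\<And>g k. g \<in> carrier G \<Longrightarrow>
           \<phi> g ** ketbra (\<Psi> k) ** cadjoint (\<phi> g) \<in> range (\<lambda>l. ketbra (\<Psi> l))"
  shows "\<exists>(\<pi> :: 'g \<Rightarrow> 'n \<Rightarrow> 'n) (\<phi>mon :: 'g \<Rightarrow> complex^'n^'n) (phase :: 'g \<Rightarrow> 'n \<Rightarrow> real).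
           (\<forall>g\<in>carrier G. \<pi> g permutes (UNIV :: 'n set)) \<and>
           (\<forall>g\<in>carrier G. \<forall>h\<in>carrier G. \<pi> (g \<otimes>\<^bsub>G\<^esub> h) = \<pi> g \<circ> \<pi> h) \<and>
           unitary_rep G \<phi>mon \<and>
           (\<forall>g\<in>carrier G. monomial_mat (\<phi>mon g)) \<and>
           (\<forall>g\<in>carrier G. \<forall>k. \<phi>mon g *v axis k 1 = axis (\<pi> g k) (exp (\<i> * of_real (phase g k)))) \<and>
           (\<forall>g\<in>carrier G. \<phi> g ** (\<chi> i k. \<Psi> k $ i) = (\<chi> i k. \<Psi> k $ i) ** \<phi>mon g)"
proof -
  have "\<forall>g\<in>carrier G. \<exists>p a. monomial_action (\<phi> g) \<Psi> p a"
    using assms(3-7) by (simp add: unitary_rep_def monomial_action_exists)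
  then obtain \<pi> a where act: "\<And>g. g \<in> carrier G \<Longrightarrow> monomial_action (\<phi> g) \<Psi> (\<pi> g) (a g)"
    by metis
  then have permutes: "\<pi> g permutes UNIV" and unimodular: "cmod (a g k) = 1"
    if "g \<in> carrier G" for g k
    using that by (simp_all add: monomial_action_def)
  note mult = monomial_action_rep_mult[OF assms(1,3,5,4) act]
  show ?thesis
  proof (intro exI[of _ \<pi>] exI[of _ "\<lambda>g. gen_perm_mat (\<pi> g) (a g)"] exI[of _ "\<lambda>g k. Arg (a g k)"]
      conjI ballI allI)
    show "unitary_rep G (\<lambda>g. gen_perm_mat (\<pi> g) (a g))"
      using permutes unimodular mult by (intro unitary_rep_gen_perm_mat) auto
  next
    fix g k
    assume g: "g \<in> carrier G"
    show "monomial_mat (gen_perm_mat (\<pi> g) (a g))"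
      using permutes[OF g] unimodular[OF g]
      by (metis monomial_gen_perm_mat norm_zero permutes_bij zero_neq_one)
    show "gen_perm_mat (\<pi> g) (a g) *v axis k 1 = axis (\<pi> g k) (exp (\<i> * of_real (Arg (a g k))))"
      using unimodular[OF g] complex_norm_eq_1_exp_eq by (simp add: gen_perm_mat_axis)
    show "\<phi> g ** (\<chi> i k. \<Psi> k $ i) = (\<chi> i k. \<Psi> k $ i) ** gen_perm_mat (\<pi> g) (a g)"
      using act[OF g] by (rule monomial_action_intertwines)
  qed (use permutes mult in auto)
qed

end
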